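(* It holds that $$\mathrm{cl}\,\mathrm{conv}(P^B\setminus C)=\mathrm{cl}\,\mathrm{conv}(P^B\setminus T^C)=\mathrm{cl}\,\mathrm{conv}(P^B\setminus R^C).$$
   Context: Let $A\in\mathbb{R}^{m\times n}$ have full row rank, $b\in\mathbb{R}^m$, and $P=\{x\in\mathbb{R}^n_+ : Ax=b\}$. Let $C\subseteq\mathbb{R}^n$ be an open convex set. Fix a basis $B$ of $P$ with nonbasic set $N=\{1,\dots,n\}\setminus B$. Write $P=\{x: x_i=\bar b_i-\sum_{j\in N}\bar a_{ij}x_j\ (i\in B),\ x_j\ge0\ (j=1,\dots,n)\}$ with $\bar b\ge0$. The basic solution $\bar x$ has $\bar x_i=\bar b_i$ ($i\in B$) and $\bar x_i=0$ ($i\in N$). $P^B$ is obtained by dropping $x_i\ge0$ for $i\in B$. For $j\in N$, $\bar r^j$ has $\bar r^j_k=-\bar a_{kj}$ ($k\in B$), $\bar r^j_j=1$, and $\bar r^j_k=0$ otherwise. Thus $P^B=\{\bar x+\sum_{j\in N}x_j\bar r^j:x_j\ge0\}$. It is assumed that $\bar x\notin\mathrm{cl}(C)$. For $j\in N$, $\alpha_j=\inf\{\lambda\ge0:\bar x+\lambda\bar r^j\in C\}$ and $\beta_j=\sup\{\lambda\ge0:\bar x+\lambda\bar r^j\in C\}$, with $\alpha_j=+\infty$, $\beta_j=-\infty$ if that halfline misses $C$. The set $N$ is partitioned into - $N_0=\{j:\alpha_j=+\infty,\beta_j=-\infty\}$, - $N_1=\{j:\alpha_j\in(0,\infty),\beta_j=+\infty\}$,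 - $N_2=\{j:\alpha_j\in(0,\infty),\beta_j\in(\alpha_j,\infty)\}$. For a set $K$, $\mathrm{recc}(K)=\{d:x+\lambda d\in K\ \forall x\in K,\lambda\ge0\}$. Define - $T=\{\bar x\}+\mathrm{conv}\big(\bigcup_{j\in N_1\cup N_2}\{\lambda\bar r^j:\alpha_j<\lambda<\beta_j\}\big)$ and $T^C=T+\mathrm{recc}(C)$; - $R=\{\bar x\}+\mathrm{conv}\big(\bigcup_{j\in N_1}\{\lambda\bar r^j:\alpha_j<\lambda<\beta_j\}\big)$ and $R^C=R+\mathrm{recc}(C)$. Here $\mathrm{cl}\,\mathrm{conv}$ denotes the closure of the convex hull. *)

theory Defs
  imports "HOL-Analysis.Analysis" "HOL-Library.Extended_Real"
begin

text \<open>Setting: A is an m x n real matrix (index types 'm, 'n), b in R^m,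
P = {x >= 0. A x = b}. A basis B is a set of column indices with
|B| = m and linearly independent columns; it is a (feasible) basis of P
when the associated basic solution is nonnegative.\<close>

definition is_basis :: "real^'n^'m \<Rightarrow> 'n set \<Rightarrow> bool" where
  "is_basis A B \<longleftrightarrow> card B = CARD('m) \<and> inj_on (\<lambda>j. column j A) B
      \<and> independent ((\<lambda>j. column j A) ` B)"

definition basic_sol :: "real^'n^'m \<Rightarrow> real^'m \<Rightarrow> 'n set \<Rightarrow> real^'n" where
  "basic_sol A b B = (THE x. A *v x = b \<and> (\<forall>i. i \<notin> B \<longrightarrow> x $ i = 0))"

text \<open>Ray r^j (j nonbasic): r_j = 1, r_k = 0 for other nonbasic k, and
the basic components determined by A r = 0, i.e. r_k = - abar_kj.\<close>
definition ray :: "real^'n^'m \<Rightarrow> 'n set \<Rightarrow> 'n \<Rightarrow> real^'n" where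
  "ray A B j = (THE r. A *v r = 0 \<and> r $ j = 1 \<and> (\<forall>k. k \<notin> B \<and> k \<noteq> j \<longrightarrow> r $ k = 0))"

text \<open>P^B: drop the nonnegativity of the basic variables.\<close>
definition PB :: "real^'n^'m \<Rightarrow> real^'m \<Rightarrow> 'n set \<Rightarrow> (real^'n) set" where
  "PB A b B = {x. A *v x = b \<and> (\<forall>j. j \<notin> B \<longrightarrow> 0 \<le> x $ j)}"

definition recc :: "('a::real_vector) set \<Rightarrow> 'a set" where
  "recc K = {d. \<forall>x\<in>K. \<forall>s::real. s \<ge> 0 \<longrightarrow> x + s *\<^sub>R d \<in> K}"

text \<open>alpha_j = inf, beta_j = sup of {lambda >= 0. xbar + lambda r^j in C}, as extended
reals, so that alpha_j = +infinity and beta_j = -infinity for the empty set.\<close>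
definition alpha :: "real^'n^'m \<Rightarrow> real^'m \<Rightarrow> 'n set \<Rightarrow> (real^'n) set \<Rightarrow> 'n \<Rightarrow> ereal" where
  "alpha A b B C j = Inf (ereal ` {s. s \<ge> 0 \<and> basic_sol A b B + s *\<^sub>R ray A B j \<in> C})"

definition beta :: "real^'n^'m \<Rightarrow> real^'m \<Rightarrow> 'n set \<Rightarrow> (real^'n) set \<Rightarrow> 'n \<Rightarrow> ereal" where
  "beta A b B C j = Sup (ereal ` {s. s \<ge> 0 \<and> basic_sol A b B + s *\<^sub>R ray A B j \<in> C})"

definition N1 :: "real^'n^'m \<Rightarrow> real^'m \<Rightarrow> 'n set \<Rightarrow> (real^'n) set \<Rightarrow> 'n set" where
  "N1 A b B C = {j. j \<notin> B \<and> 0 < alpha A b B C j \<and> alpha A b B C j < \<infinity>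
                    \<and> beta A b B C j = \<infinity>}"

definition N2 :: "real^'n^'m \<Rightarrow> real^'m \<Rightarrow> 'n set \<Rightarrow> (real^'n) set \<Rightarrow> 'n set" where
  "N2 A b B C = {j. j \<notin> B \<and> 0 < alpha A b B C j \<and> alpha A b B C j < \<infinity>
                    \<and> alpha A b B C j < beta A b B C j \<and> beta A b B C j < \<infinity>}"

definition hullset :: "real^'n^'m \<Rightarrow> real^'m \<Rightarrow> 'n set \<Rightarrow> (real^'n) set \<Rightarrow> 'n set \<Rightarrow> (real^'n) set" where
  "hullset A b B C J = (\<lambda>y. basic_sol A b B + y) ` (convex hull
      (\<Union>j\<in>J. {s *\<^sub>R ray A B j | s. alpha A b B C j < ereal s \<and> ereal s < beta A b B C j}))"

definition Tset where "Tset A b B C = hullset A b B C (N1 A b B C \<union> N2 A b B C)"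
definition Rset where "Rset A b B C = hullset A b B C (N1 A b B C)"

definition TC where "TC A b B C = {t + d | t d. t \<in> Tset A b B C \<and> d \<in> recc C}"
definition RC where "RC A b B C = {t + d | t d. t \<in> Rset A b B C \<and> d \<in> recc C}"

end

theory Submission
  imports Defs
begin

text \<open>
  Since points of T lie on the open segments of the rays inside the convex set C, we have
  T^C \<subseteq> C, and clearly R^C \<subseteq> T^C; so only cl conv(P^B \<setminus> R^C) \<subseteq> cl conv(P^B \<setminus> C)
  needs an argument. If x \<in> P^B is not in the right-hand side, a hyperplane a y = c separates
  it, so that P^B \<inter> {a y \<le> c} \<subseteq> C while the basic solution lies strictly above. Every
  ray r^j with a r^j < 0 then eventually stays in C, hence j \<in> N_1, and \<alpha>_j is at most the
  parameter where the ray crosses the hyperplane. Shrinking the components of x along these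
  rays by the right factor gives a point of R with the same value of a, and the remainder is
  a direction of P^B \<inter> {a y \<le> c}, hence of recc C. Thus x \<in> R^C.
\<close>

section \<open>Basic solution and rays\<close>

lemma mult_vec_eq_sum_columns_on:
  fixes A :: "real^'n^'m"
  assumes "\<And>i. i \<notin> B \<Longrightarrow> v $ i = 0"
  shows "A *v v = (\<Sum>i\<in>B. v $ i *\<^sub>R column i A)"
proof -
  have "A *v v = (\<Sum>i\<in>UNIV. v $ i *\<^sub>R column i A)"
    by (simp add: matrix_mult_sum scalar_mult_eq_scaleR)
  also have "\<dots> = (\<Sum>i\<in>B. v $ i *\<^sub>R column i A)"
    using assms by (intro sum.mono_neutral_right) auto
  finally show ?thesis .
qed

lemma is_basis_kernel_eq_0:
  fixes A :: "real^'n^'m"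
  assumes "is_basis A B" "A *v v = 0" "\<And>i. i \<notin> B \<Longrightarrow> v $ i = 0"
  shows "v = 0"
proof -
  let ?c = "\<lambda>j. column j A"
  have inj: "inj_on ?c B" and ind: "independent (?c ` B)"
    using assms(1) by (auto simp: is_basis_def)
  have "(\<Sum>w\<in>?c ` B. v $ inv_into B ?c w *\<^sub>R w) = (\<Sum>i\<in>B. v $ i *\<^sub>R ?c i)"
    using inj by (auto simp: sum.reindex inv_into_f_f[OF inj] intro!: sum.cong)
  also have "\<dots> = 0"
    using assms(2) mult_vec_eq_sum_columns_on[OF assms(3), where A = A] by simp
  finally have "(\<Sum>w\<in>?c ` B. v $ inv_into B ?c w *\<^sub>R w) = 0" .
  then have "\<forall>w\<in>?c ` B. v $ inv_into B ?c w = 0"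
    using ind[unfolded independent_explicit] by (auto dest!: spec[of _ "\<lambda>w. v $ inv_into B ?c w"])
  then have "v $ i = 0" for i
    using assms(3) by (cases "i \<in> B") (auto simp: inv_into_f_f[OF inj])
  then show ?thesis by (simp add: vec_eq_iff)
qed

lemma is_basis_solvable:
  fixes A :: "real^'n^'m"
  assumes "is_basis A B"
  obtains v where "A *v v = w" "\<And>i. i \<notin> B \<Longrightarrow> v $ i = 0"
proof -
  let ?c = "\<lambda>j. column j A"
  have inj: "inj_on ?c B" and ind: "independent (?c ` B)" and card: "card B = CARD('m)"
    using assms by (auto simp: is_basis_def)
  have "dim (UNIV :: (real^'m) set) \<le> card (?c ` B)"
    using card inj by (simp add: card_image)
  then have "w \<in> span (?c ` B)"
    using card_ge_dim_independent[OF _ ind] by blast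
  then obtain u where u: "w = (\<Sum>z\<in>?c ` B. u z *\<^sub>R z)"
    using span_finite[of "?c ` B"] by auto
  define v where "v = (\<chi> i. if i \<in> B then u (?c i) else 0)"
  have "A *v v = (\<Sum>i\<in>B. u (?c i) *\<^sub>R ?c i)"
    using mult_vec_eq_sum_columns_on[of B v A] by (simp add: v_def)
  also have "\<dots> = w"
    using u inj by (simp add: sum.reindex)
  finally show thesis
    using that by (simp add: v_def)
qed

lemma is_basis_unique_solution:
  fixes A :: "real^'n^'m"
  assumes "is_basis A B"
  shows "\<exists>!v. A *v v = w \<and> (\<forall>i. i \<notin> B \<longrightarrow> v $ i = 0)"
proof -
  obtain v where v: "A *v v = w" "\<And>i. i \<notin> B \<Longrightarrow> v $ i = 0"
    using is_basis_solvable[OF assms, where w = w] by metis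
  have "y = v" if "A *v y = w" "\<forall>i. i \<notin> B \<longrightarrow> y $ i = 0" for y
    using is_basis_kernel_eq_0[OF assms, of "y - v"] v that
    by (simp add: matrix_vector_mult_diff_distrib)
  with v show ?thesis by blast
qed

lemma basic_sol:
  fixes A :: "real^'n^'m"
  assumes "is_basis A B"
  shows "A *v basic_sol A b B = b" and "\<And>i. i \<notin> B \<Longrightarrow> basic_sol A b B $ i = 0"
  using theI'[OF is_basis_unique_solution[OF assms, of b]] unfolding basic_sol_def by auto

lemma ray:
  fixes A :: "real^'n^'m"
  assumes "is_basis A B" "j \<notin> B"
  shows "A *v ray A B j = 0" and "\<And>k. k \<notin> B \<Longrightarrow> ray A B j $ k = (if k = j then 1 else 0)"
proof -
  let ?R = "\<lambda>r. A *v r = 0 \<and> r $ j = 1 \<and> (\<forall>k. k \<notin> B \<and> k \<noteq> j \<longrightarrow> r $ k = 0)"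
  obtain v where v: "A *v v = - column j A" "\<And>i. i \<notin> B \<Longrightarrow> v $ i = 0"
    using is_basis_solvable[OF assms(1), where w = "- column j A"] by metis
  have "?R (v + axis j 1)"
    using v assms(2)
    by (simp add: matrix_vector_right_distrib matrix_vector_mult_basis) (simp add: axis_def)
  moreover have "r = r'" if "?R r" "?R r'" for r r'
  proof -
    have "(r - r') $ i = 0" if "i \<notin> B" for i
      using \<open>?R r\<close> \<open>?R r'\<close> that by (cases "i = j") auto
    then show ?thesis
      using is_basis_kernel_eq_0[OF assms(1), of "r - r'"] that
      by (simp add: matrix_vector_mult_diff_distrib)
  qed
  ultimately have "\<exists>!r. ?R r"
    by blast
  then have "?R (ray A B j)"
    unfolding ray_def by (rule theI')
  then show "A *v ray A B j = 0" "\<And>k. k \<notin> B \<Longrightarrow> ray A B j $ k = (if k = j then 1 else 0)"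
    by auto
qed

lemma mult_sum_rays:
  fixes A :: "real^'n^'m"
  assumes "is_basis A B" "S \<subseteq> - B"
  shows "A *v (\<Sum>j\<in>S. c j *\<^sub>R ray A B j) = 0"
proof -
  have "A *v (c j *\<^sub>R ray A B j) = 0" if "j \<in> S" for j
    using assms ray(1)[OF assms(1)] that by (auto simp: matrix_vector_mult_scaleR)
  then show ?thesis
    by (simp add: linear_sum[OF matrix_vector_mul_linear])
qed

lemma sum_rays_nonbasic_component:
  fixes A :: "real^'n^'m"
  assumes "is_basis A B" "S \<subseteq> - B" "k \<notin> B"
  shows "(\<Sum>j\<in>S. c j *\<^sub>R ray A B j) $ k = (if k \<in> S then c k else 0)"
proof -
  have "(c j *\<^sub>R ray A B j) $ k = (if k = j then c k else 0)" if "j \<in> S" for j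
    using assms ray(2)[OF assms(1) _ assms(3)] that by auto
  then have "(\<Sum>j\<in>S. c j *\<^sub>R ray A B j) $ k = (\<Sum>j\<in>S. if k = j then c k else 0)"
    by (simp cong: sum.cong)
  then show ?thesis by (simp add: sum.delta)
qed

lemma PB_decomposition:
  fixes A :: "real^'n^'m"
  assumes "is_basis A B" "A *v x = b"
  shows "x = basic_sol A b B + (\<Sum>j\<in>-B. x $ j *\<^sub>R ray A B j)"
proof -
  let ?v = "x - basic_sol A b B - (\<Sum>j\<in>-B. x $ j *\<^sub>R ray A B j)"
  have "A *v ?v = 0"
    using assms basic_sol(1)[OF assms(1)] mult_sum_rays[OF assms(1), of "- B"]
    by (simp add: matrix_vector_mult_diff_distrib)
  moreover have "?v $ i = 0" if "i \<notin> B" for i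
    using that basic_sol(2)[OF assms(1)] sum_rays_nonbasic_component[OF assms(1), of "- B"]
    by simp
  ultimately have "?v = 0"
    using is_basis_kernel_eq_0[OF assms(1)] by blast
  then show ?thesis
    by (simp add: algebra_simps)
qed

lemma basic_sol_in_PB:
  fixes A :: "real^'n^'m"
  assumes "is_basis A B"
  shows "basic_sol A b B \<in> PB A b B"
  using basic_sol[OF assms] by (simp add: PB_def)

lemma basic_sol_plus_ray_in_PB:
  fixes A :: "real^'n^'m"
  assumes "is_basis A B" "j \<notin> B" "0 \<le> s"
  shows "basic_sol A b B + s *\<^sub>R ray A B j \<in> PB A b B"
  using assms basic_sol[OF assms(1)] ray[OF assms(1,2)]
  by (simp add: PB_def matrix_vector_right_distrib matrix_vector_mult_scaleR)

section \<open>Points of the rays inside C\<close>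

lemma ray_point_in_C:
  assumes "convex C" "alpha A b B C j < ereal s" "ereal s < beta A b B C j"
  shows "basic_sol A b B + s *\<^sub>R ray A B j \<in> C"
proof -
  define I where "I = {s. basic_sol A b B + s *\<^sub>R ray A B j \<in> C}"
  have "I = (\<lambda>s. s *\<^sub>R ray A B j) -` ((\<lambda>y. - basic_sol A b B + y) ` C)"
    by (force simp: I_def)
  then have "convex I"
    using assms(1) by (simp add: convex_linear_vimage convex_translation linear_scaleR_left)
  obtain s1 s2 where "s1 \<in> I" "s1 < s" "s2 \<in> I" "s < s2"
    using assms(2,3) unfolding alpha_def beta_def I_def by (auto simp: Inf_less_iff less_Sup_iff)
  moreover from this have "closed_segment s1 s2 \<subseteq> I"
    using \<open>convex I\<close> by (simp add: convex_contains_segment)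
  ultimately have "s \<in> I"
    by (auto simp: closed_segment_eq_real_ivl)
  then show ?thesis
    unfolding I_def by simp
qed

lemma hullset_subset:
  assumes "convex C"
  shows "hullset A b B C J \<subseteq> C"
proof -
  let ?S = "\<Union>j\<in>J. {s *\<^sub>R ray A B j | s. alpha A b B C j < ereal s \<and> ereal s < beta A b B C j}"
  have "(\<lambda>y. basic_sol A b B + y) ` ?S \<subseteq> C"
    using ray_point_in_C[OF assms] by auto
  then have "convex hull ((\<lambda>y. basic_sol A b B + y) ` ?S) \<subseteq> C"
    using assms by (rule hull_minimal)
  then show ?thesis
    unfolding hullset_def convex_hull_translation .
qed

lemma TC_subset:
  assumes "convex C"
  shows "TC A b B C \<subseteq> C"
proof
  fix x assume "x \<in> TC A b B C"
  then obtain t d where x: "x = t + d" "t \<in> Tset A b B C" "d \<in> recc C"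
    unfolding TC_def by auto
  have "t \<in> C"
    using hullset_subset[OF assms] x(2) unfolding Tset_def by (rule subsetD)
  then have "t + 1 *\<^sub>R d \<in> C"
    using x(3) zero_le_one unfolding recc_def by blast
  then show "x \<in> C"
    using x(1) by simp
qed

lemma RC_subset_TC: "RC A b B C \<subseteq> TC A b B C"
proof -
  have "Rset A b B C \<subseteq> Tset A b B C"
    unfolding Rset_def Tset_def hullset_def by (intro image_mono hull_mono) auto
  then show ?thesis
    unfolding RC_def TC_def by blast
qed

lemma alpha_pos:
  assumes "basic_sol A b B \<notin> closure C"
  shows "0 < alpha A b B C j"
proof (rule ccontr)
  let ?xb = "basic_sol A b B" and ?r = "ray A B j"
  assume "\<not> 0 < alpha A b B C j"
  have "\<exists>y\<in>C. dist y ?xb < e" if "0 < e" for e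
  proof -
    define \<delta> where "\<delta> = e / (norm ?r + 1)"
    have "0 < \<delta>" using \<open>0 < e\<close> by (simp add: \<delta>_def add_nonneg_pos)
    then have "alpha A b B C j < ereal \<delta>"
      using \<open>\<not> 0 < alpha A b B C j\<close> by (simp add: not_less le_less_trans)
    then obtain s where s: "0 \<le> s" "?xb + s *\<^sub>R ?r \<in> C" "s < \<delta>"
      unfolding alpha_def by (auto simp: Inf_less_iff)
    have "dist (?xb + s *\<^sub>R ?r) ?xb = s * norm ?r"
      using s by (simp add: dist_norm)
    also have "\<dots> \<le> \<delta> * norm ?r"
      using s by (simp add: mult_right_mono)
    also have "\<dots> < e"
      using \<open>0 < e\<close> by (simp add: \<delta>_def pos_divide_less_eq add_nonneg_pos)
    finally show ?thesis
      using s by blast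
  qed
  then have "?xb \<in> closure C"
    by (simp add: closure_approachable)
  with assms show False ..
qed

lemma beta_eq_infinity:
  assumes "\<And>s. s0 \<le> s \<Longrightarrow> basic_sol A b B + s *\<^sub>R ray A B j \<in> C"
  shows "beta A b B C j = \<infinity>"
  unfolding beta_def
proof (rule ereal_top)
  fix M :: real
  have "max M (max s0 0) \<in> {s. 0 \<le> s \<and> basic_sol A b B + s *\<^sub>R ray A B j \<in> C}"
    using assms by simp
  then have "ereal (max M (max s0 0)) \<le> Sup (ereal ` {s. 0 \<le> s \<and> basic_sol A b B + s *\<^sub>R ray A B j \<in> C})"
    by (intro Sup_upper imageI)
  then show "ereal M \<le> Sup (ereal ` {s. 0 \<le> s \<and> basic_sol A b B + s *\<^sub>R ray A B j \<in> C})"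
    by (rule order_trans[rotated]) simp
qed

lemma recc_if_ray_in_open_convex:
  fixes C :: "'a::real_normed_vector set"
  assumes "open C" "convex C" "\<And>t. 0 \<le> t \<Longrightarrow> p + t *\<^sub>R d \<in> C"
  shows "d \<in> recc C"
  unfolding recc_def
proof (intro CollectI ballI allI impI)
  fix z and s :: real
  assume "z \<in> C" "0 \<le> s"
  obtain e where e: "0 < e" "ball z e \<subseteq> C"
    using assms(1) \<open>z \<in> C\<close> open_contains_ball by blast
  define n where "n = norm (z - p)"
  define \<epsilon> where "\<epsilon> = e / (2 * e + 2 * n)"
  have "0 \<le> n" by (simp add: n_def)
  then have \<epsilon>: "0 < \<epsilon>" "\<epsilon> < 1"
    using e by (auto simp: \<epsilon>_def field_simps)
  \<comment> \<open>z is a convex combination of a point z' near z and a far point p + (s/\<epsilon>) d of the ray\<close>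
  define z' where "z' = (1 / (1 - \<epsilon>)) *\<^sub>R (z - \<epsilon> *\<^sub>R p)"
  have z': "(1 - \<epsilon>) *\<^sub>R z' = z - \<epsilon> *\<^sub>R p"
    using \<epsilon> by (simp add: z'_def)
  have "z' - z = (1 / (1 - \<epsilon>)) *\<^sub>R ((1 - \<epsilon>) *\<^sub>R z' - (1 - \<epsilon>) *\<^sub>R z)"
    using \<epsilon> by (simp add: scaleR_right_diff_distrib)
  also have "\<dots> = (\<epsilon> / (1 - \<epsilon>)) *\<^sub>R (z - p)"
    by (simp only: z') (simp add: algebra_simps)
  finally have "norm (z' - z) = \<epsilon> / (1 - \<epsilon>) * n"
    using \<epsilon> by (simp add: n_def)
  also have "\<dots> < e"
  proof -
    have "\<epsilon> * (n + e) < e"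
      using e \<open>0 \<le> n\<close> unfolding \<epsilon>_def by (simp add: pos_divide_less_eq)
    then have "\<epsilon> * n < e * (1 - \<epsilon>)"
      by (simp add: algebra_simps)
    then show ?thesis
      using \<epsilon> by (simp add: pos_divide_less_eq)
  qed
  finally have "z' \<in> ball z e"
    by (simp add: dist_norm norm_minus_commute)
  then have "z' \<in> C"
    using e(2) by blast
  moreover have "p + (s / \<epsilon>) *\<^sub>R d \<in> C"
    using assms(3) \<open>0 \<le> s\<close> \<epsilon> by simp
  ultimately have "(1 - \<epsilon>) *\<^sub>R z' + \<epsilon> *\<^sub>R (p + (s / \<epsilon>) *\<^sub>R d) \<in> C"
    using \<epsilon> assms(2) by (intro convexD) auto
  moreover have "(1 - \<epsilon>) *\<^sub>R z' + \<epsilon> *\<^sub>R (p + (s / \<epsilon>) *\<^sub>R d) = z + s *\<^sub>R d"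
  proof -
    have "\<epsilon> *\<^sub>R (p + (s / \<epsilon>) *\<^sub>R d) = \<epsilon> *\<^sub>R p + s *\<^sub>R d"
      using \<epsilon> by (simp add: scaleR_right_distrib)
    then show ?thesis
      by (simp only: z') (simp add: algebra_simps)
  qed
  ultimately show "z + s *\<^sub>R d \<in> C"
    by simp
qed

section \<open>Rays descending below a separating hyperplane\<close>

lemma descending_ray_in_N1:
  fixes A :: "real^'n^'m"
  assumes basis: "is_basis A B" and xb: "basic_sol A b B \<notin> closure C"
    and half: "\<And>y. y \<in> PB A b B \<Longrightarrow> inner a y \<le> c \<Longrightarrow> y \<in> C"
    and above: "c < inner a (basic_sol A b B)"
    and j: "j \<notin> B" "inner a (ray A B j) < 0"
  shows "j \<in> N1 A b B C"
    and "c - inner a (basic_sol A b B) \<le> real_of_ereal (alpha A b B C j) * inner a (ray A B j)"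
proof -
  let ?xb = "basic_sol A b B" and ?g = "inner a (ray A B j)"
  define s0 where "s0 = (c - inner a ?xb) / ?g"
  have "0 < s0"
    using above j(2) by (simp add: s0_def divide_neg_neg)
  have on_ray: "?xb + s *\<^sub>R ray A B j \<in> C" if "s0 \<le> s" for s
  proof (rule half)
    show "?xb + s *\<^sub>R ray A B j \<in> PB A b B"
      using basic_sol_plus_ray_in_PB[OF basis j(1)] \<open>0 < s0\<close> that by simp
    have "s * ?g \<le> s0 * ?g"
      using that j(2) by (simp add: mult_right_mono_neg)
    then show "inner a (?xb + s *\<^sub>R ray A B j) \<le> c"
      using j(2) by (simp add: inner_add_right s0_def)
  qed
  have "beta A b B C j = \<infinity>"
    using on_ray by (rule beta_eq_infinity)
  moreover have "alpha A b B C j \<le> ereal s0"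
    unfolding alpha_def using on_ray[of s0] \<open>0 < s0\<close> by (intro Inf_lower) auto
  moreover have "0 < alpha A b B C j"
    using xb by (rule alpha_pos)
  ultimately obtain \<alpha> where \<alpha>: "alpha A b B C j = ereal \<alpha>" "0 < \<alpha>" "\<alpha> \<le> s0"
    and "beta A b B C j = \<infinity>"
    by (cases "alpha A b B C j") auto
  then show "j \<in> N1 A b B C"
    using j(1) by (simp add: N1_def)
  have "s0 * ?g \<le> \<alpha> * ?g"
    using \<alpha> j(2) by (simp add: mult_right_mono_neg)
  then show "c - inner a ?xb \<le> real_of_ereal (alpha A b B C j) * ?g"
    using \<alpha>(1) j(2) by (simp add: s0_def)
qed

lemma sum_rays_in_Rset:
  assumes "J \<subseteq> N1 A b B C" "\<And>j. j \<in> J \<Longrightarrow> 0 \<le> \<mu> j"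
    and "1 < (\<Sum>j\<in>J. \<mu> j / real_of_ereal (alpha A b B C j))"
  shows "basic_sol A b B + (\<Sum>j\<in>J. \<mu> j *\<^sub>R ray A B j) \<in> Rset A b B C"
proof -
  let ?\<alpha> = "\<lambda>j. real_of_ereal (alpha A b B C j)"
  let ?U = "\<Union>j\<in>N1 A b B C. {s *\<^sub>R ray A B j | s. alpha A b B C j < ereal s \<and> ereal s < beta A b B C j}"
  define S where "S = (\<Sum>j\<in>J. \<mu> j / ?\<alpha> j)"
  have "1 < S"
    using assms(3) by (simp add: S_def)
  have \<alpha>: "alpha A b B C j = ereal (?\<alpha> j)" "0 < ?\<alpha> j" "beta A b B C j = \<infinity>" if "j \<in> J" for j
    using assms(1) that by (cases "alpha A b B C j"; force simp: N1_def)+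
  \<comment> \<open>S \<alpha> r lies beyond \<alpha> on each ray since S > 1, and the weights \<mu> / (\<alpha> S) sum to 1\<close>
  have "(\<Sum>j\<in>J. (\<mu> j / ?\<alpha> j / S) *\<^sub>R ((S * ?\<alpha> j) *\<^sub>R ray A B j)) \<in> convex hull ?U"
  proof (rule convex_sum)
    show "(\<Sum>j\<in>J. \<mu> j / ?\<alpha> j / S) = 1"
      using \<open>1 < S\<close> unfolding sum_divide_distrib[symmetric] S_def[symmetric] by simp
    show "0 \<le> \<mu> j / ?\<alpha> j / S" if "j \<in> J" for j
      using assms(2)[OF that] \<alpha>(2)[OF that] \<open>1 < S\<close> by simp
    show "(S * ?\<alpha> j) *\<^sub>R ray A B j \<in> convex hull ?U" if "j \<in> J" for j
    proof (rule hull_inc, rule UN_I)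
      show "j \<in> N1 A b B C"
        using assms(1) that by blast
      show "(S * ?\<alpha> j) *\<^sub>R ray A B j
          \<in> {s *\<^sub>R ray A B j | s. alpha A b B C j < ereal s \<and> ereal s < beta A b B C j}"
      proof -
        have "?\<alpha> j < S * ?\<alpha> j"
          using \<alpha>(2)[OF that] \<open>1 < S\<close> by simp
        then have "alpha A b B C j < ereal (S * ?\<alpha> j)"
          using \<alpha>(1)[OF that] by (metis less_ereal.simps(1))
        then show ?thesis
          using \<alpha>(3)[OF that] by auto
      qed
    qed
  qed auto
  also have "(\<Sum>j\<in>J. (\<mu> j / ?\<alpha> j / S) *\<^sub>R ((S * ?\<alpha> j) *\<^sub>R ray A B j)) = (\<Sum>j\<in>J. \<mu> j *\<^sub>R ray A B j)"
    using \<alpha>(2) \<open>1 < S\<close> by (intro sum.cong) (auto simp: less_imp_neq[symmetric])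
  finally show ?thesis
    unfolding Rset_def hullset_def by (rule imageI)
qed

lemma descending_rays_below_halfspace_in_Rset:
  fixes A :: "real^'n^'m"
  assumes basis: "is_basis A B" and xb: "basic_sol A b B \<notin> closure C"
    and half: "\<And>y. y \<in> PB A b B \<Longrightarrow> inner a y \<le> c \<Longrightarrow> y \<in> C"
    and above: "c < inner a (basic_sol A b B)"
    and J: "\<And>j. j \<in> J \<Longrightarrow> j \<notin> B \<and> inner a (ray A B j) < 0" "\<And>j. j \<in> J \<Longrightarrow> 0 \<le> \<mu> j"
    and below: "inner a (basic_sol A b B + (\<Sum>j\<in>J. \<mu> j *\<^sub>R ray A B j)) < c"
  shows "basic_sol A b B + (\<Sum>j\<in>J. \<mu> j *\<^sub>R ray A B j) \<in> Rset A b B C"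
proof (rule sum_rays_in_Rset)
  let ?g = "\<lambda>j. inner a (ray A B j)" and ?\<alpha> = "\<lambda>j. real_of_ereal (alpha A b B C j)"
  define c' where "c' = c - inner a (basic_sol A b B)"
  have "c' < 0" and sum_below: "(\<Sum>j\<in>J. \<mu> j * ?g j) < c'"
    using above below by (simp_all add: c'_def inner_add_right inner_sum_right)
  show "J \<subseteq> N1 A b B C"
    using descending_ray_in_N1(1)[OF basis xb half above] J(1) by blast
  show "0 \<le> \<mu> j" if "j \<in> J" for j
    using J(2) that .
  have "\<mu> j * ?g j / c' \<le> \<mu> j / ?\<alpha> j" if "j \<in> J" for j
  proof -
    have "j \<in> N1 A b B C" "c' \<le> ?\<alpha> j * ?g j"
      using descending_ray_in_N1[OF basis xb half above] J(1)[OF that] by (simp_all add: c'_def)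
    moreover from this have "0 < ?\<alpha> j"
      by (cases "alpha A b B C j") (auto simp: N1_def)
    ultimately have "?g j / c' \<le> 1 / ?\<alpha> j"
      using \<open>c' < 0\<close> by (simp add: field_simps)
    then show ?thesis
      using J(2)[OF that] by (metis mult_left_mono times_divide_eq_right mult.right_neutral)
  qed
  then have "(\<Sum>j\<in>J. \<mu> j * ?g j) / c' \<le> (\<Sum>j\<in>J. \<mu> j / ?\<alpha> j)"
    by (simp add: sum_divide_distrib sum_mono)
  moreover have "1 < (\<Sum>j\<in>J. \<mu> j * ?g j) / c'"
    using sum_below \<open>c' < 0\<close> by (simp add: less_divide_eq)
  ultimately show "1 < (\<Sum>j\<in>J. \<mu> j / ?\<alpha> j)"
    by linarith
qed

lemma recc_if_PB_halfspace_direction: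
  fixes A :: "real^'n^'m"
  assumes "open C" "convex C"
    and half: "\<And>y. y \<in> PB A b B \<Longrightarrow> inner a y \<le> c \<Longrightarrow> y \<in> C"
    and "x \<in> PB A b B" "inner a x \<le> c"
    and "A *v d = 0" "\<And>k. k \<notin> B \<Longrightarrow> 0 \<le> d $ k" "inner a d \<le> 0"
  shows "d \<in> recc C"
proof (rule recc_if_ray_in_open_convex[OF assms(1,2)])
  fix t :: real
  assume "0 \<le> t"
  show "x + t *\<^sub>R d \<in> C"
  proof (rule half)
    show "x + t *\<^sub>R d \<in> PB A b B"
      using assms(4,6,7) \<open>0 \<le> t\<close>
      by (simp add: PB_def matrix_vector_right_distrib matrix_vector_mult_scaleR)
    have "t * inner a d \<le> 0"
      using assms(8) \<open>0 \<le> t\<close> by (simp add: mult_nonneg_nonpos)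
    then show "inner a (x + t *\<^sub>R d) \<le> c"
      using assms(5) by (simp add: inner_add_right)
  qed
qed

lemma inner_PB_point:
  fixes A :: "real^'n^'m"
  assumes "is_basis A B" "x \<in> PB A b B"
  shows "inner a x = inner a (basic_sol A b B) + (\<Sum>j\<in>- B. x $ j * inner a (ray A B j))"
proof -
  have "x = basic_sol A b B + (\<Sum>j\<in>- B. x $ j *\<^sub>R ray A B j)"
    using assms(2) by (intro PB_decomposition[OF assms(1)]) (simp add: PB_def)
  then have "inner a x = inner a (basic_sol A b B + (\<Sum>j\<in>- B. x $ j *\<^sub>R ray A B j))"
    by (rule arg_cong)
  then show ?thesis
    by (simp add: inner_add_right inner_sum_right)
qed

lemma PB_minus_scaled_rays:
  fixes A :: "real^'n^'m"
  assumes basis: "is_basis A B" and x: "x \<in> PB A b B"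
    and "J \<subseteq> - B" "0 \<le> \<theta>" "\<theta> \<le> 1"
  defines "d \<equiv> x - (basic_sol A b B + (\<Sum>j\<in>J. (\<theta> * x $ j) *\<^sub>R ray A B j))"
  shows "A *v d = 0" and "\<And>k. k \<notin> B \<Longrightarrow> 0 \<le> d $ k"
proof -
  show "A *v d = 0"
    using x basic_sol(1)[OF basis] mult_sum_rays[OF basis assms(3)]
    by (simp add: PB_def d_def matrix_vector_mult_diff_distrib matrix_vector_right_distrib)
  fix k assume k: "k \<notin> B"
  then have "0 \<le> x $ k"
    using x by (simp add: PB_def)
  moreover have "d $ k = x $ k - (if k \<in> J then \<theta> * x $ k else 0)"
    using sum_rays_nonbasic_component[OF basis assms(3) k, of "\<lambda>j. \<theta> * x $ j"]
      basic_sol(2)[OF basis k]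
    by (simp add: d_def)
  ultimately show "0 \<le> d $ k"
    using mult_left_le_one_le[OF \<open>0 \<le> x $ k\<close> assms(4,5)] by simp
qed

lemma shrink_descending_part:
  fixes A :: "real^'n^'m"
  assumes basis: "is_basis A B" and x: "x \<in> PB A b B" "inner a x < inner a (basic_sol A b B)"
  defines "J \<equiv> {j. j \<notin> B \<and> 0 < x $ j \<and> inner a (ray A B j) < 0}"
  obtains \<theta> where "0 < \<theta>" "\<theta> \<le> 1"
    and "inner a (basic_sol A b B + (\<Sum>j\<in>J. (\<theta> * x $ j) *\<^sub>R ray A B j)) = inner a x"
proof -
  let ?xb = "basic_sol A b B"
  define g where "g j = inner a (ray A B j)" for j
  define P where "P = - (\<Sum>j\<in>J. x $ j * g j)"
  define Q where "Q = (\<Sum>j\<in>- B - J. x $ j * g j)"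
  have "inner a x = inner a ?xb + (\<Sum>j\<in>- B. x $ j * g j)"
    unfolding g_def by (rule inner_PB_point[OF basis x(1)])
  also have "(\<Sum>j\<in>- B. x $ j * g j) = Q - P"
    using sum.subset_diff[of J "- B"] by (simp add: P_def Q_def J_def g_def subset_eq)
  finally have ax: "inner a x = inner a ?xb - P + Q"
    by simp
  have "0 \<le> Q"
    unfolding Q_def
  proof (rule sum_nonneg)
    fix j assume "j \<in> - B - J"
    then have "0 \<le> x $ j" "x $ j = 0 \<or> 0 \<le> g j"
      using x(1) by (auto simp: J_def g_def PB_def)
    then show "0 \<le> x $ j * g j"
      by auto
  qed
  then have "0 < P - Q" "0 < P"
    using ax x(2) by linarith+
  show thesis
  proof
    show "0 < (P - Q) / P" "(P - Q) / P \<le> 1"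
      using \<open>0 < P - Q\<close> \<open>0 < P\<close> \<open>0 \<le> Q\<close> by simp_all
    have "(P - Q) / P * P = P - Q"
      using \<open>0 < P\<close> by simp
    then show "inner a (?xb + (\<Sum>j\<in>J. ((P - Q) / P * x $ j) *\<^sub>R ray A B j)) = inner a x"
      using ax by (simp add: inner_add_right inner_sum_right g_def P_def sum_distrib_left mult.assoc)
  qed
qed

lemma halfspace_point_in_RC:
  fixes A :: "real^'n^'m"
  assumes basis: "is_basis A B" and "open C" "convex C" and xb: "basic_sol A b B \<notin> closure C"
    and half: "\<And>y. y \<in> PB A b B \<Longrightarrow> inner a y \<le> c \<Longrightarrow> y \<in> C"
    and x: "x \<in> PB A b B" "inner a x < c"
  shows "x \<in> RC A b B C"
proof -
  let ?xb = "basic_sol A b B" and ?r = "ray A B"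
  define J where "J = {j. j \<notin> B \<and> 0 < x $ j \<and> inner a (?r j) < 0}"
  have "\<not> inner a ?xb \<le> c"
    using half[OF basic_sol_in_PB[OF basis]] xb closure_subset by blast
  then have above: "c < inner a ?xb"
    by simp
  \<comment> \<open>shrinking the descending part of x keeps the value of a, so y and x - y stay below the hyperplane\<close>
  have "inner a x < inner a ?xb"
    using x(2) above by simp
  then obtain \<theta> where \<theta>: "0 < \<theta>" "\<theta> \<le> 1"
    and ay: "inner a (?xb + (\<Sum>j\<in>J. (\<theta> * x $ j) *\<^sub>R ?r j)) = inner a x"
    unfolding J_def by (rule shrink_descending_part[OF basis x(1)])
  define y where "y = ?xb + (\<Sum>j\<in>J. (\<theta> * x $ j) *\<^sub>R ?r j)"
  have "y \<in> Rset A b B C"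
    unfolding y_def
  proof (rule descending_rays_below_halfspace_in_Rset[OF basis xb half above])
    show "j \<notin> B \<and> inner a (?r j) < 0" "0 \<le> \<theta> * x $ j" if "j \<in> J" for j
      using that \<theta>(1) by (simp_all add: J_def)
    show "inner a (?xb + (\<Sum>j\<in>J. (\<theta> * x $ j) *\<^sub>R ?r j)) < c"
      using ay x(2) by simp
  qed
  moreover have "x - y \<in> recc C"
  proof (rule recc_if_PB_halfspace_direction[OF assms(2,3) half x(1) less_imp_le[OF x(2)]])
    show "A *v (x - y) = 0" "\<And>k. k \<notin> B \<Longrightarrow> 0 \<le> (x - y) $ k"
      using PB_minus_scaled_rays[OF basis x(1) _ less_imp_le[OF \<theta>(1)] \<theta>(2), of J]
      by (auto simp: y_def J_def)
    show "inner a (x - y) \<le> 0"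
      using ay by (simp add: y_def inner_diff_right)
  qed
  ultimately have "y + (x - y) \<in> RC A b B C"
    unfolding RC_def by blast
  then show ?thesis
    by simp
qed

lemma PB_minus_RC_subset_closure_hull:
  fixes A :: "real^'n^'m"
  assumes "is_basis A B" "open C" "convex C" "basic_sol A b B \<notin> closure C"
  shows "PB A b B - RC A b B C \<subseteq> closure (convex hull (PB A b B - C))"
proof (rule subsetI, rule ccontr)
  let ?D = "closure (convex hull (PB A b B - C))"
  fix x assume x: "x \<in> PB A b B - RC A b B C" "x \<notin> ?D"
  obtain a c where ac: "inner a x < c" "\<forall>y\<in>?D. c < inner a y"
    using separating_hyperplane_closed_point[OF _ _ x(2)] by auto
  have "y \<in> C" if "y \<in> PB A b B" "inner a y \<le> c" for y
  proof (rule ccontr)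
    assume "y \<notin> C"
    then have "y \<in> ?D"
      using that(1) hull_subset[of "PB A b B - C" convex] closure_subset by blast
    with ac(2) that(2) show False
      by fastforce
  qed
  then have "x \<in> RC A b B C"
    using halfspace_point_in_RC[OF assms] x(1) ac(1) by blast
  with x(1) show False
    by blast
qed

theorem theorem2:
  fixes A :: "real^'n^'m" and b :: "real^'m" and B :: "'n set" and C :: "(real^'n) set"
  assumes "rank A = CARD('m)"
    and "open C" and "convex C"
    and "is_basis A B"
    and "\<forall>i. 0 \<le> basic_sol A b B $ i"
    and "basic_sol A b B \<notin> closure C"
  shows "closure (convex hull (PB A b B - C)) = closure (convex hull (PB A b B - TC A b B C))
       \<and> closure (convex hull (PB A b B - TC A b B C)) = closure (convex hull (PB A b B - RC A b B C))"
proof -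
  have mono: "closure (convex hull X) \<subseteq> closure (convex hull Y)" if "X \<subseteq> Y" for X Y :: "(real^'n) set"
    using that by (intro closure_mono hull_mono)
  have "closure (convex hull (PB A b B - C)) \<subseteq> closure (convex hull (PB A b B - TC A b B C))"
    using TC_subset[OF assms(3)] by (intro mono) blast
  moreover have "closure (convex hull (PB A b B - TC A b B C))
      \<subseteq> closure (convex hull (PB A b B - RC A b B C))"
    using RC_subset_TC by (intro mono) blast
  moreover have "closure (convex hull (PB A b B - RC A b B C)) \<subseteq> closure (convex hull (PB A b B - C))"
    using PB_minus_RC_subset_closure_hull[OF assms(4,2,3,6)]
    by (intro closure_minimal hull_minimal) (simp_all add: convex_closure)
  ultimately show ?thesis
    by blast
qed

end
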